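(* A finite triangle-free simple graph $G$ admits a two-acyclic factorization system if and only if its chromatic number satisfies $\chi(G)\le 3$.
   Context: Directed (multi)graphs are assumed to have a loop at every vertex. For a directed multigraph $(G,\to)$, form $G_A$ by relabelling arrows: an arrow $x\to y$ is of type $x\hookrightarrow y$ if for every $z$ with $z\to x$ there is an arrow $z\to y$; it is of type $x\twoheadrightarrow y$ if for every $z$ with $y\to z$ there is an arrow $x\to z$; if both hold it is counted as both types; otherwise it remains a plain arrow. $(G,\to)$ forms a two-acyclic factorization system if in $G_A$: (i) there are no $x\twoheadrightarrow y\twoheadrightarrow x$ and no $x\hookrightarrow y\hookrightarrow x$ with $x\ne y$; (ii) there is no $x\twoheadrightarrow y\hookrightarrow x$ with $x\neq y$; (iii) for every arrow $x\to z$ there exists $y$ with $x\twoheadrightarrow y\hookrightarrow z$. An undirected (multi)graph admits a two-acyclic factorization system if some orientation of its edges forms one. *)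

theory Defs
  imports Main
begin

definition simple_graph :: "'a set \<Rightarrow> ('a \<Rightarrow> 'a \<Rightarrow> bool) \<Rightarrow> bool" where
  "simple_graph V E \<longleftrightarrow> finite V \<and> (\<forall>x y. E x y \<longrightarrow> x \<in> V \<and> y \<in> V)
     \<and> (\<forall>x y. E x y \<longrightarrow> E y x) \<and> (\<forall>x. \<not> E x x)"

definition triangle_free :: "('a \<Rightarrow> 'a \<Rightarrow> bool) \<Rightarrow> bool" where
  "triangle_free E \<longleftrightarrow> \<not> (\<exists>x y z. E x y \<and> E y z \<and> E x z)"

definition colourable :: "'a set \<Rightarrow> ('a \<Rightarrow> 'a \<Rightarrow> bool) \<Rightarrow> nat \<Rightarrow> bool" where
  "colourable V E k \<longleftrightarrow> (\<exists>c :: 'a \<Rightarrow> nat. (\<forall>x\<in>V. c x < k) \<and> (\<forall>x y. E x y \<longrightarrow> c x \<noteq> c y))"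

definition chromatic_number :: "'a set \<Rightarrow> ('a \<Rightarrow> 'a \<Rightarrow> bool) \<Rightarrow> nat" where
  "chromatic_number V E = (LEAST k. colourable V E k)"

definition orientation :: "('a \<Rightarrow> 'a \<Rightarrow> bool) \<Rightarrow> ('a \<Rightarrow> 'a \<Rightarrow> bool) \<Rightarrow> bool" where
  "orientation E D \<longleftrightarrow> (\<forall>x y. D x y \<longrightarrow> E x y) \<and> (\<forall>x y. E x y \<longrightarrow> (D x y \<longleftrightarrow> \<not> D y x))"

definition with_loops :: "('a \<Rightarrow> 'a \<Rightarrow> bool) \<Rightarrow> 'a \<Rightarrow> 'a \<Rightarrow> bool" where
  "with_loops D x y \<longleftrightarrow> x = y \<or> D x y"

definition mono_arrow :: "'a set \<Rightarrow> ('a \<Rightarrow> 'a \<Rightarrow> bool) \<Rightarrow> 'a \<Rightarrow> 'a \<Rightarrow> bool" where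
  "mono_arrow V A x y \<longleftrightarrow> A x y \<and> (\<forall>z\<in>V. A z x \<longrightarrow> A z y)"

definition epi_arrow :: "'a set \<Rightarrow> ('a \<Rightarrow> 'a \<Rightarrow> bool) \<Rightarrow> 'a \<Rightarrow> 'a \<Rightarrow> bool" where
  "epi_arrow V A x y \<longleftrightarrow> A x y \<and> (\<forall>z\<in>V. A y z \<longrightarrow> A x z)"

definition two_acyclic_fs :: "'a set \<Rightarrow> ('a \<Rightarrow> 'a \<Rightarrow> bool) \<Rightarrow> bool" where
  "two_acyclic_fs V A \<longleftrightarrow>
     (\<forall>x\<in>V. \<forall>y\<in>V. epi_arrow V A x y \<and> epi_arrow V A y x \<longrightarrow> x = y)
   \<and> (\<forall>x\<in>V. \<forall>y\<in>V. mono_arrow V A x y \<and> mono_arrow V A y x \<longrightarrow> x = y)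
   \<and> (\<forall>x\<in>V. \<forall>y\<in>V. epi_arrow V A x y \<and> mono_arrow V A y x \<longrightarrow> x = y)
   \<and> (\<forall>x\<in>V. \<forall>z\<in>V. A x z \<longrightarrow> (\<exists>y\<in>V. epi_arrow V A x y \<and> mono_arrow V A y z))"

definition admits_two_acyclic_fs :: "'a set \<Rightarrow> ('a \<Rightarrow> 'a \<Rightarrow> bool) \<Rightarrow> bool" where
  "admits_two_acyclic_fs V E \<longleftrightarrow> (\<exists>D. orientation E D \<and> two_acyclic_fs V (with_loops D))"

end

theory Submission
  imports Defs
begin

text \<open>
  An orientation \<open>D\<close> of a triangle-free graph has no transitive triangles. Hence in \<open>G\<^sub>A\<close> the
  non-identity arrows \<open>x \<twoheadrightarrow> y\<close> are exactly the arrows of \<open>D\<close> into sinks, and the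
  non-identity arrows \<open>y \<hookrightarrow> z\<close> exactly the arrows out of sources. Conditions (i) and (ii)
  then hold automatically, while (iii) says that every arrow starts at a source or ends at a
  sink, i.e. that \<open>D\<close> has no directed path of three arrows. By the easy case of the
  Gallai--Roy theorem such an orientation exists iff the graph is 3-colourable: orient every
  edge from the smaller to the larger colour; conversely give sources, sinks and all other
  vertices three different colours.
\<close>

definition path3_free :: "('a \<Rightarrow> 'a \<Rightarrow> bool) \<Rightarrow> bool" where
  "path3_free D \<longleftrightarrow> \<not> (\<exists>w x y z. D w x \<and> D x y \<and> D y z)"

lemma path3_free_iff_source_or_sink:
  "path3_free D \<longleftrightarrow> (\<forall>x z. D x z \<longrightarrow> (\<forall>w. \<not> D w x) \<or> (\<forall>v. \<not> D z v))"
  unfolding path3_free_def by blast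

lemma orientation_asymp: "orientation E D \<Longrightarrow> asymp D"
  unfolding orientation_def by blast

lemma orientation_triangle_free: "orientation E D \<Longrightarrow> triangle_free E \<Longrightarrow> triangle_free D"
  unfolding orientation_def triangle_free_def by blast

lemma orientation_in_vertices:
  "simple_graph V E \<Longrightarrow> orientation E D \<Longrightarrow> D x y \<Longrightarrow> x \<in> V \<and> y \<in> V"
  unfolding simple_graph_def orientation_def by blast

lemma triangle_freeD: "triangle_free D \<Longrightarrow> D x y \<Longrightarrow> D y z \<Longrightarrow> \<not> D x z"
  unfolding triangle_free_def by blast

lemma epi_arrow_with_loops_iff_sink:
  assumes in_V: "\<forall>x y. D x y \<longrightarrow> x \<in> V \<and> y \<in> V" and "asymp D" and "triangle_free D"
  shows "epi_arrow V (with_loops D) x y \<longleftrightarrow> x = y \<or> D x y \<and> (\<forall>z. \<not> D y z)"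
proof
  assume epi: "epi_arrow V (with_loops D) x y"
  show "x = y \<or> D x y \<and> (\<forall>z. \<not> D y z)"
  proof (cases "x = y")
    case False
    then have "D x y"
      using epi unfolding epi_arrow_def with_loops_def by blast
    moreover have "\<not> D y z" for z
    proof
      assume "D y z"
      then have "x = z \<or> D x z"
        using epi in_V unfolding epi_arrow_def with_loops_def by blast
      then show False
        using \<open>D x y\<close> \<open>D y z\<close> asympD[OF \<open>asymp D\<close>] triangle_freeD[OF \<open>triangle_free D\<close>] by blast
    qed
    ultimately show ?thesis by blast
  qed simp
qed (auto simp: epi_arrow_def with_loops_def)

lemma mono_arrow_with_loops_iff_source:
  assumes in_V: "\<forall>x y. D x y \<longrightarrow> x \<in> V \<and> y \<in> V" and "asymp D" and "triangle_free D"
  shows "mono_arrow V (with_loops D) x y \<longleftrightarrow> x = y \<or> D x y \<and> (\<forall>w. \<not> D w x)"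
proof
  assume mono: "mono_arrow V (with_loops D) x y"
  show "x = y \<or> D x y \<and> (\<forall>w. \<not> D w x)"
  proof (cases "x = y")
    case False
    then have "D x y"
      using mono unfolding mono_arrow_def with_loops_def by blast
    moreover have "\<not> D w x" for w
    proof
      assume "D w x"
      then have "w = y \<or> D w y"
        using mono in_V unfolding mono_arrow_def with_loops_def by blast
      then show False
        using \<open>D x y\<close> \<open>D w x\<close> asympD[OF \<open>asymp D\<close>] triangle_freeD[OF \<open>triangle_free D\<close>] by blast
    qed
    ultimately show ?thesis by blast
  qed simp
qed (auto simp: mono_arrow_def with_loops_def)

lemma two_acyclic_fs_with_loops_iff_path3_free:
  assumes in_V: "\<forall>x y. D x y \<longrightarrow> x \<in> V \<and> y \<in> V" and "asymp D" and "triangle_free D"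
  shows "two_acyclic_fs V (with_loops D) \<longleftrightarrow> path3_free D"
proof -
  note epi = epi_arrow_with_loops_iff_sink[OF assms]
  note mono = mono_arrow_with_loops_iff_source[OF assms]
  have acyclic:
    "\<And>x y. epi_arrow V (with_loops D) x y \<and> epi_arrow V (with_loops D) y x \<longrightarrow> x = y"
    "\<And>x y. mono_arrow V (with_loops D) x y \<and> mono_arrow V (with_loops D) y x \<longrightarrow> x = y"
    "\<And>x y. epi_arrow V (with_loops D) x y \<and> mono_arrow V (with_loops D) y x \<longrightarrow> x = y"
    using asympD[OF \<open>asymp D\<close>] by (auto simp: epi mono)
  have factorization:
    "(\<forall>x\<in>V. \<forall>z\<in>V. with_loops D x z \<longrightarrow>
        (\<exists>y\<in>V. epi_arrow V (with_loops D) x y \<and> mono_arrow V (with_loops D) y z))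
      \<longleftrightarrow> path3_free D"
    unfolding path3_free_iff_source_or_sink
  proof (intro iffI allI impI ballI)
    fix x z
    assume "\<forall>x\<in>V. \<forall>z\<in>V. with_loops D x z \<longrightarrow>
        (\<exists>y\<in>V. epi_arrow V (with_loops D) x y \<and> mono_arrow V (with_loops D) y z)"
      and "D x z"
    then obtain y where "x = y \<or> D x y \<and> (\<forall>v. \<not> D y v)" and "y = z \<or> D y z \<and> (\<forall>w. \<not> D w y)"
      using in_V unfolding epi mono with_loops_def by blast
    then show "(\<forall>w. \<not> D w x) \<or> (\<forall>v. \<not> D z v)"
      using \<open>D x z\<close> asympD[OF \<open>asymp D\<close>] by blast
  next
    fix x z
    assume "\<forall>x z. D x z \<longrightarrow> (\<forall>w. \<not> D w x) \<or> (\<forall>v. \<not> D z v)"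
      and "x \<in> V" "z \<in> V" "with_loops D x z"
    then show "\<exists>y\<in>V. epi_arrow V (with_loops D) x y \<and> mono_arrow V (with_loops D) y z"
      unfolding epi mono with_loops_def by blast
  qed
  show ?thesis
    unfolding two_acyclic_fs_def factorization by (simp add: acyclic)
qed

lemma colourable_3_if_path3_free_orientation:
  assumes "orientation E D" and "path3_free D"
  shows "colourable V E 3"
proof -
  define c :: "'a \<Rightarrow> nat" where
    "c x = (if \<forall>w. \<not> D w x then 0 else if \<forall>v. \<not> D x v then 1 else 2)" for x
  have "c x \<noteq> c y" if "D x y" for x y
  proof -
    have "c x \<in> {0, 2}" and "c y \<in> {1, 2}"
      using that unfolding c_def by auto
    moreover have "\<not> (c x = 2 \<and> c y = 2)"
    proof
      assume "c x = 2 \<and> c y = 2"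
      then obtain w v where "D w x" and "D y v"
        unfolding c_def by (auto split: if_splits)
      then show False
        using that assms(2) unfolding path3_free_def by blast
    qed
    ultimately show ?thesis by auto
  qed
  moreover have "D x y \<or> D y x" if "E x y" for x y
    using that assms(1) unfolding orientation_def by blast
  ultimately have "c x \<noteq> c y" if "E x y" for x y
    using that by metis
  moreover have "c x < 3" for x
    unfolding c_def by simp
  ultimately show ?thesis
    unfolding colourable_def by blast
qed

lemma path3_free_orientation_if_colourable_3:
  assumes "simple_graph V E" and "colourable V E 3"
  obtains D where "orientation E D" and "path3_free D"
proof -
  obtain c :: "'a \<Rightarrow> nat" where c_lt: "\<forall>x\<in>V. c x < 3" and proper: "\<forall>x y. E x y \<longrightarrow> c x \<noteq> c y"
    using assms(2) unfolding colourable_def by blast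
  define D where "D x y \<longleftrightarrow> E x y \<and> c x < c y" for x y
  have "orientation E D"
    using assms(1) proper unfolding orientation_def simple_graph_def D_def by fastforce
  moreover have "path3_free D"
    unfolding path3_free_def
  proof clarify
    fix w x y z
    assume "D w x" "D x y" "D y z"
    moreover from \<open>D y z\<close> have "z \<in> V"
      using assms(1) unfolding D_def simple_graph_def by blast
    ultimately have "c w < c x" "c x < c y" "c y < c z" "c z < 3"
      using c_lt unfolding D_def by auto
    then show False by linarith
  qed
  ultimately show thesis by (rule that)
qed

lemma colourable_3_iff_path3_free_orientation:
  assumes "simple_graph V E"
  shows "colourable V E 3 \<longleftrightarrow> (\<exists>D. orientation E D \<and> path3_free D)"
proof
  assume "colourable V E 3"
  with assms obtain D where "orientation E D" and "path3_free D"
    by (rule path3_free_orientation_if_colourable_3)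
  then show "\<exists>D. orientation E D \<and> path3_free D" by blast
qed (auto intro: colourable_3_if_path3_free_orientation)

lemma colourable_mono: "colourable V E k \<Longrightarrow> k \<le> m \<Longrightarrow> colourable V E m"
  unfolding colourable_def by (meson order_less_le_trans)

lemma simple_graph_colourable_card:
  assumes "simple_graph V E"
  shows "colourable V E (card V)"
proof -
  have "finite V"
    using assms unfolding simple_graph_def by blast
  then obtain f :: "'a \<Rightarrow> nat" where f: "bij_betw f V {0..<card V}"
    by (rule ex_bij_betw_finite_nat[THEN exE])
  show ?thesis
    unfolding colourable_def
  proof (intro exI conjI ballI allI impI)
    show "f x < card V" if "x \<in> V" for x
      using bij_betw_apply[OF f that] by simp
    fix x y
    assume "E x y"
    then have "x \<in> V" "y \<in> V" "x \<noteq> y"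
      using assms unfolding simple_graph_def by blast+
    then show "f x \<noteq> f y"
      using inj_on_contraD[OF bij_betw_imp_inj_on[OF f]] by blast
  qed
qed

lemma chromatic_number_le_iff_colourable:
  assumes "colourable V E n"
  shows "chromatic_number V E \<le> k \<longleftrightarrow> colourable V E k"
proof
  assume "chromatic_number V E \<le> k"
  moreover have "colourable V E (chromatic_number V E)"
    unfolding chromatic_number_def using assms by (rule LeastI)
  ultimately show "colourable V E k"
    by (rule colourable_mono[rotated])
qed (simp add: chromatic_number_def Least_le)

theorem proposition3p41:
  fixes V :: "'a set" and E :: "'a \<Rightarrow> 'a \<Rightarrow> bool"
  assumes "simple_graph V E" and "triangle_free E"
  shows "admits_two_acyclic_fs V E \<longleftrightarrow> chromatic_number V E \<le> 3"
proof -
  have "two_acyclic_fs V (with_loops D) \<longleftrightarrow> path3_free D" if "orientation E D" for D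
  proof (rule two_acyclic_fs_with_loops_iff_path3_free)
    show "\<forall>x y. D x y \<longrightarrow> x \<in> V \<and> y \<in> V"
      using orientation_in_vertices[OF assms(1) that] by blast
    show "asymp D"
      using that by (rule orientation_asymp)
    show "triangle_free D"
      using that assms(2) by (rule orientation_triangle_free)
  qed
  then have "admits_two_acyclic_fs V E \<longleftrightarrow> (\<exists>D. orientation E D \<and> path3_free D)"
    unfolding admits_two_acyclic_fs_def by blast
  also have "\<dots> \<longleftrightarrow> colourable V E 3"
    using colourable_3_iff_path3_free_orientation[OF assms(1)] ..
  also have "\<dots> \<longleftrightarrow> chromatic_number V E \<le> 3"
    using chromatic_number_le_iff_colourable[OF simple_graph_colourable_card[OF assms(1)]] ..
  finally show ?thesis .
qed

end
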